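(* For any tree $T$ and $c>0$, there exists $C>1$ such that the following holds. Given a $(c,t)$-sparse graph $\Gamma$ on $n$ vertices, for some $t$, every subgraph $G\subseteq\Gamma$ with at least $Ctn$ edges contains a copy of $T$ which is an induced subgraph of $\Gamma$.
   Context: A graph $\Gamma$ is $(c,t)$-sparse if for every pair of (not necessarily disjoint) vertex subsets $A,B\subseteq V(\Gamma)$ with $|A|,|B|\ge t$ we have $e(A,B)\le (1-c)|A||B|$, where $e(A,B)$ is the number of ordered pairs $(a,b)\in A\times B$ such that $\{a,b\}$ is an edge of $\Gamma$. *)

theory Defs
  imports Complex_Main
begin

definition simple_graph :: "'a set \<Rightarrow> ('a \<Rightarrow> 'a \<Rightarrow> bool) \<Rightarrow> bool" where
  "simple_graph V E \<longleftrightarrow> finite V \<and>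
     (\<forall>u v. E u v \<longrightarrow> u \<in> V \<and> v \<in> V \<and> u \<noteq> v \<and> E v u)"

definition num_edges :: "'a set \<Rightarrow> ('a \<Rightarrow> 'a \<Rightarrow> bool) \<Rightarrow> nat" where
  "num_edges V E = card {{u, v} | u v. u \<in> V \<and> v \<in> V \<and> E u v}"

definition e_pairs :: "('a \<Rightarrow> 'a \<Rightarrow> bool) \<Rightarrow> 'a set \<Rightarrow> 'a set \<Rightarrow> nat" where
  "e_pairs E A B = card {(a, b). a \<in> A \<and> b \<in> B \<and> E a b}"

definition sparse :: "real \<Rightarrow> real \<Rightarrow> 'a set \<Rightarrow> ('a \<Rightarrow> 'a \<Rightarrow> bool) \<Rightarrow> bool" where
  "sparse c t V E \<longleftrightarrow> (\<forall>A B. A \<subseteq> V \<longrightarrow> B \<subseteq> V \<longrightarrow> real (card A) \<ge> t \<longrightarrow> real (card B) \<ge> t \<longrightarrow>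
      real (e_pairs E A B) \<le> (1 - c) * real (card A) * real (card B))"

definition connected_graph :: "'a set \<Rightarrow> ('a \<Rightarrow> 'a \<Rightarrow> bool) \<Rightarrow> bool" where
  "connected_graph V E \<longleftrightarrow> (\<forall>u\<in>V. \<forall>v\<in>V. (\<lambda>x y. x \<in> V \<and> y \<in> V \<and> E x y)\<^sup>*\<^sup>* u v)"

definition is_cycle :: "'a set \<Rightarrow> ('a \<Rightarrow> 'a \<Rightarrow> bool) \<Rightarrow> 'a list \<Rightarrow> bool" where
  "is_cycle V E xs \<longleftrightarrow> length xs \<ge> 3 \<and> distinct xs \<and> set xs \<subseteq> V \<and>
     (\<forall>i. Suc i < length xs \<longrightarrow> E (xs ! i) (xs ! Suc i)) \<and> E (last xs) (hd xs)"

definition acyclic_graph :: "'a set \<Rightarrow> ('a \<Rightarrow> 'a \<Rightarrow> bool) \<Rightarrow> bool" where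
  "acyclic_graph V E \<longleftrightarrow> (\<nexists>xs. is_cycle V E xs)"

definition is_tree :: "'a set \<Rightarrow> ('a \<Rightarrow> 'a \<Rightarrow> bool) \<Rightarrow> bool" where
  "is_tree V E \<longleftrightarrow> simple_graph V E \<and> V \<noteq> {} \<and> connected_graph V E \<and> acyclic_graph V E"

text \<open>f embeds the graph (VT,ET) as a subgraph of G = (V,EG), and the image is induced in
  \<Gamma> = (V,E): for x,y in VT, f x f y is an edge of \<Gamma> only if xy is an edge of T.\<close>
definition induced_copy ::
  "'b set \<Rightarrow> ('b \<Rightarrow> 'b \<Rightarrow> bool) \<Rightarrow> 'a set \<Rightarrow> ('a \<Rightarrow> 'a \<Rightarrow> bool) \<Rightarrow> ('a \<Rightarrow> 'a \<Rightarrow> bool) \<Rightarrow> ('b \<Rightarrow> 'a) \<Rightarrow> bool" where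
  "induced_copy VT ET V EG E f \<longleftrightarrow> inj_on f VT \<and> f ` VT \<subseteq> V \<and>
     (\<forall>x\<in>VT. \<forall>y\<in>VT. ET x y \<longrightarrow> EG (f x) (f y)) \<and>
     (\<forall>x\<in>VT. \<forall>y\<in>VT. E (f x) (f y) \<longrightarrow> ET x y)"

end

theory Submission
  imports Defs
begin

(*
  Pass to a subgraph W of G of large minimum degree D. Call p in W h-good, with density \<delta> and
  relative to the set U of vertices already used, if a \<delta>-fraction of its W-neighbours lie outside
  the closed \<Gamma>-neighbourhood of U - {p} and are themselves (h-1)-good. Sparseness makes goodness
  robust: for |S| >= t, fewer than t vertices of \<Gamma> are adjacent to more than (1 - c)|S| vertices
  of S, so adding one vertex to U destroys the h-goodness of p (even at the reduced density
  c\<delta>/2) for only O(t) choices of that vertex. Double counting over the edges of G[W] yields a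
  root that is good to depth |T|. Then T is embedded greedily along an ordering in which every
  vertex has exactly one earlier neighbour: each new vertex is a good child of its parent, lies
  outside the \<Gamma>-neighbourhood of all other earlier vertices, and is chosen among the many
  candidates so as to spoil the goodness of none of them.
*)

section \<open>Counting in graphs\<close>

lemma sum_card_swap:
  "finite A \<Longrightarrow> finite B \<Longrightarrow> (\<Sum>a\<in>A. card {b\<in>B. R a b}) = (\<Sum>b\<in>B. card {a\<in>A. R a b})"
  by (rule sum_multicount_gen) auto

lemma real_card_Diff_ge: "finite B \<Longrightarrow> real (card A) - real (card B) \<le> real (card (A - B))"
  using diff_card_le_card_Diff[of B A] by linarith

lemma card_less_mult_le_sum:
  fixes f :: "'a \<Rightarrow> real"
  assumes "finite A" "\<And>a. a \<in> A \<Longrightarrow> 0 \<le> f a" "0 \<le> x"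
  shows "real (card {a\<in>A. x < f a}) * x \<le> sum f A"
proof -
  have "real (card {a\<in>A. x < f a}) * x = (\<Sum>a\<in>{a\<in>A. x < f a}. x)" by simp
  also have "\<dots> \<le> (\<Sum>a\<in>{a\<in>A. x < f a}. f a)" by (rule sum_mono) simp
  also have "\<dots> \<le> sum f A" by (rule sum_mono2) (use assms in auto)
  finally show ?thesis .
qed

lemma card_many_incidences_le:
  fixes a B :: real
  assumes "finite X" "finite Y" "Y \<noteq> {}" "0 < a"
    and "\<And>y. y \<in> Y \<Longrightarrow> real (card {x \<in> X. R x y}) \<le> B"
  shows "real (card {x \<in> X. a * real (card Y) < real (card {y \<in> Y. R x y})}) \<le> B / a"
proof -
  let ?H = "{x \<in> X. a * real (card Y) < real (card {y \<in> Y. R x y})}"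
  have "real (card ?H) * (a * real (card Y)) \<le> (\<Sum>x\<in>X. real (card {y \<in> Y. R x y}))"
    using assms(1,4) by (intro card_less_mult_le_sum) auto
  also have "\<dots> = (\<Sum>y\<in>Y. real (card {x \<in> X. R x y}))"
    using sum_card_swap[OF assms(1,2), of R] by (simp only: of_nat_sum[symmetric])
  also have "\<dots> \<le> (\<Sum>y\<in>Y. B)"
    using assms(5) by (rule sum_mono)
  finally have "real (card Y) * (real (card ?H) * a) \<le> real (card Y) * B"
    by (simp add: ac_simps)
  moreover have "0 < real (card Y)"
    using assms(2,3) by (simp add: card_gt_0_iff)
  ultimately have "real (card ?H) * a \<le> B"
    by simp
  with assms(4) show ?thesis
    by (simp add: field_simps)
qed

lemma e_pairs_eq_sum:
  assumes "finite A" "finite B"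
  shows "e_pairs E A B = (\<Sum>a\<in>A. card {b\<in>B. E a b})"
proof -
  have "{(a, b). a \<in> A \<and> b \<in> B \<and> E a b} = (SIGMA a:A. {b\<in>B. E a b})"
    by auto
  with assms show ?thesis
    by (simp add: e_pairs_def card_SigmaI)
qed

definition nbh :: "'a set \<Rightarrow> ('a \<Rightarrow> 'a \<Rightarrow> bool) \<Rightarrow> 'a \<Rightarrow> 'a set" where
  "nbh W E p = {y \<in> W. E p y}"

definition closed_nbh :: "('a \<Rightarrow> 'a \<Rightarrow> bool) \<Rightarrow> 'a set \<Rightarrow> 'a set" where
  "closed_nbh E U = U \<union> {y. \<exists>u\<in>U. E u y}"

lemma closed_nbh_empty [simp]: "closed_nbh E {} = {}"
  by (simp add: closed_nbh_def)

lemma closed_nbh_insert_Diff_subset: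
  "closed_nbh E (insert u U - {p}) \<subseteq> closed_nbh E {u} \<union> closed_nbh E (U - {p})"
  by (auto simp: closed_nbh_def)

lemma num_edges_le_Diff_singleton:
  assumes fin: "finite V" and sym: "\<And>u v. E u v \<Longrightarrow> E v u"
  shows "num_edges V E \<le> num_edges (V - {w}) E + card (nbh V E w)"
proof -
  let ?edges = "\<lambda>V. {{u, v} | u v. u \<in> V \<and> v \<in> V \<and> E u v}"
  have "?edges V \<subseteq> ?edges (V - {w}) \<union> (\<lambda>y. {w, y}) ` nbh V E w"
    using sym by (fastforce simp: nbh_def insert_commute)
  moreover have "?edges (V - {w}) \<subseteq> (\<lambda>(u, v). {u, v}) ` ((V - {w}) \<times> (V - {w}))"
    by auto
  then have "finite (?edges (V - {w}))"
    using fin by (meson finite_Diff finite_SigmaI finite_imageI finite_subset)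
  ultimately have "card (?edges V) \<le> card (?edges (V - {w}) \<union> (\<lambda>y. {w, y}) ` nbh V E w)"
    using fin by (intro card_mono) (auto simp: nbh_def)
  also have "\<dots> \<le> card (?edges (V - {w})) + card ((\<lambda>y. {w, y}) ` nbh V E w)"
    by (rule card_Un_le)
  also have "card ((\<lambda>y. {w, y}) ` nbh V E w) \<le> card (nbh V E w)"
    by (rule card_image_le) (use fin in \<open>simp add: nbh_def\<close>)
  finally show ?thesis unfolding num_edges_def by simp
qed

lemma exists_min_degree_subgraph:
  assumes "finite V" "\<And>u v. E u v \<Longrightarrow> E v u" "D * real (card V) < real (num_edges V E)"
  shows "\<exists>W\<subseteq>V. W \<noteq> {} \<and> (\<forall>w\<in>W. D \<le> real (card (nbh W E w)))"
  using assms
proof (induction "card V" arbitrary: V rule: less_induct)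
  case less
  show ?case
  proof (cases "\<forall>w\<in>V. D \<le> real (card (nbh V E w))")
    case True
    have "V \<noteq> {}"
      using less.prems(3) by (auto simp: num_edges_def)
    with True show ?thesis by blast
  next
    case False
    then obtain w where w: "w \<in> V" "real (card (nbh V E w)) < D" by (auto simp: not_le)
    have card_less: "card (V - {w}) < card V"
      using less.prems(1) w(1) by (rule card_Diff1_less)
    have "card V > 0"
      using less.prems(1) w(1) card_gt_0_iff by blast
    then have "real (card V) = real (card (V - {w})) + 1"
      using less.prems(1) w(1) by (simp add: card_Diff_singleton of_nat_diff)
    then have "D * real (card V) = D * real (card (V - {w})) + D"
      by (simp add: distrib_left)
    moreover have "num_edges V E \<le> num_edges (V - {w}) E + card (nbh V E w)"
      using less.prems(1,2) by (rule num_edges_le_Diff_singleton)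
    then have "real (num_edges V E) \<le> real (num_edges (V - {w}) E) + real (card (nbh V E w))"
      by linarith
    ultimately have "D * real (card (V - {w})) < real (num_edges (V - {w}) E)"
      using less.prems(3) w(2) by linarith
    then obtain W where "W \<subseteq> V - {w}" "W \<noteq> {}" "\<forall>w\<in>W. D \<le> real (card (nbh W E w))"
      using less.hyps[OF card_less] less.prems(1,2) by (meson finite_Diff)
    then show ?thesis by blast
  qed
qed

lemma sparse_mono: "sparse c t V E \<Longrightarrow> c' \<le> c \<Longrightarrow> sparse c' t V E"
  unfolding sparse_def by (smt (verit) mult_right_mono of_nat_0_le_iff zero_le_mult_iff)

lemma sparse_gt_one_if_edges:
  assumes "sparse c t V E" "0 < c" "\<forall>u v. EG u v \<longrightarrow> E u v" "0 < num_edges V EG"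
  shows "1 < t"
proof (rule ccontr)
  assume "\<not> 1 < t"
  have "\<exists>u\<in>V. \<exists>v\<in>V. EG u v"
  proof (rule ccontr)
    assume "\<not> ?thesis"
    then have "{{u, v} | u v. u \<in> V \<and> v \<in> V \<and> EG u v} = {}"
      by blast
    with assms(4) show False
      by (simp add: num_edges_def)
  qed
  then obtain u v where "u \<in> V" "v \<in> V" "E u v"
    using assms(3) by blast
  then have "{u} \<subseteq> V" "{v} \<subseteq> V" "t \<le> real (card {u})" "t \<le> real (card {v})"
    using \<open>\<not> 1 < t\<close> by auto
  then have "real (e_pairs E {u} {v}) \<le> (1 - c) * real (card {u}) * real (card {v})"
    using assms(1) unfolding sparse_def by blast
  moreover have "{(a, b). a \<in> {u} \<and> b \<in> {v} \<and> E a b} = {(u, v)}"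
    using \<open>E u v\<close> by auto
  ultimately show False
    using assms(2) by (simp add: e_pairs_def)
qed

section \<open>Parent orderings of trees\<close>

text \<open>A tree is enumerated with R = S = ET; its induced copy in \<Gamma> is
  enumerated with R = EG and S = E.\<close>
definition parent_ordering :: "(nat \<Rightarrow> nat) \<Rightarrow> ('a \<Rightarrow> 'a \<Rightarrow> bool) \<Rightarrow> ('a \<Rightarrow> 'a \<Rightarrow> bool) \<Rightarrow> 'a list \<Rightarrow> bool" where
  "parent_ordering par R S xs \<longleftrightarrow>
     (\<forall>j. 0 < j \<longrightarrow> j < length xs \<longrightarrow> par j < j \<and> R (xs ! par j) (xs ! j)) \<and>
     (\<forall>i j. i < j \<longrightarrow> j < length xs \<longrightarrow> S (xs ! i) (xs ! j) \<longrightarrow> i = par j)"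

lemma parent_ordering_singleton: "parent_ordering par R S [x]"
  by (simp add: parent_ordering_def)

lemma parent_ordering_snoc:
  assumes "parent_ordering par R S xs" "p < length xs" "R (xs ! p) v"
    and "\<And>i. i < length xs \<Longrightarrow> S (xs ! i) v \<Longrightarrow> i = p"
  shows "parent_ordering (par(length xs := p)) R S (xs @ [v])"
  using assms unfolding parent_ordering_def
  by (auto simp: nth_append less_Suc_eq) (metis less_trans)+

lemma parent_ordering_snoc_avoiding:
  assumes "parent_ordering par R S xs" "distinct xs" "par (length xs) < length xs"
    and "R (xs ! par (length xs)) v" "v \<notin> closed_nbh S (set xs - {xs ! par (length xs)})"
  shows "parent_ordering par R S (xs @ [v])"
proof -
  let ?p = "par (length xs)"
  have "i = ?p" if "i < length xs" "S (xs ! i) v" for i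
  proof (rule ccontr)
    assume "i \<noteq> ?p"
    then have "xs ! i \<in> set xs - {xs ! ?p}"
      using that(1) assms(2,3) by (auto simp: nth_eq_iff_index_eq)
    then show False
      using assms(5) that(2) by (auto simp: closed_nbh_def)
  qed
  then have "parent_ordering (par(length xs := ?p)) R S (xs @ [v])"
    using assms(3,4) by (intro parent_ordering_snoc[OF assms(1)]) auto
  then show ?thesis
    by simp
qed

lemma induced_copy_of_parent_orderings:
  assumes T: "simple_graph VT ET" "distinct xs" "set xs = VT" "parent_ordering par ET ET xs"
    and G: "simple_graph V E" "simple_graph V EG" "distinct us" "length us = length xs" "set us \<subseteq> V"
      "parent_ordering par EG E us"
  shows "induced_copy VT ET V EG E (\<lambda>x. the (map_of (zip xs us) x))"
proof -
  let ?f = "\<lambda>x. the (map_of (zip xs us) x)"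
  have f_nth: "?f (xs ! i) = us ! i" if "i < length xs" for i
    using map_of_zip_nth[of xs us i] T(2) G(4) that by simp
  have index: "\<exists>i<length xs. x = xs ! i" if "x \<in> VT" for x
    using that T(3) by (metis in_set_conv_nth)
  have tree_edge: "ET (xs ! i) (xs ! j) \<Longrightarrow> EG (us ! i) (us ! j)"
    and non_edge: "E (us ! i) (us ! j) \<Longrightarrow> ET (xs ! i) (xs ! j)"
    if "i < j" "j < length xs" for i j
    using that T(4) G(4,6) unfolding parent_ordering_def by (metis gr_zeroI not_less0)+
  show ?thesis
    unfolding induced_copy_def
  proof (intro conjI ballI impI)
    show "inj_on ?f VT"
      using index f_nth T(2) G(3,4) by (smt (verit) inj_onI nth_eq_iff_index_eq)
    show "?f ` VT \<subseteq> V"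
      using index f_nth G(4,5) by (force simp: set_conv_nth)
  next
    fix x y assume "x \<in> VT" "y \<in> VT" "ET x y"
    then show "EG (?f x) (?f y)"
      using index f_nth tree_edge T(1) G(2) unfolding simple_graph_def
      by (metis linorder_neqE_nat)
  next
    fix x y assume "x \<in> VT" "y \<in> VT" "E (?f x) (?f y)"
    then show "ET x y"
      using index f_nth non_edge T(1) G(1) unfolding simple_graph_def
      by (metis linorder_neqE_nat)
  qed
qed

definition is_path :: "('a \<Rightarrow> 'a \<Rightarrow> bool) \<Rightarrow> 'a set \<Rightarrow> 'a list \<Rightarrow> bool" where
  "is_path E S P \<longleftrightarrow> P \<noteq> [] \<and> distinct P \<and> set P \<subseteq> S \<and>
     (\<forall>i. Suc i < length P \<longrightarrow> E (P ! i) (P ! Suc i))"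

definition path_connected_set :: "('a \<Rightarrow> 'a \<Rightarrow> bool) \<Rightarrow> 'a set \<Rightarrow> bool" where
  "path_connected_set E S \<longleftrightarrow> (\<forall>a\<in>S. \<forall>b\<in>S. \<exists>P. is_path E S P \<and> hd P = a \<and> last P = b)"

lemma is_path_mono: "is_path E S P \<Longrightarrow> S \<subseteq> S' \<Longrightarrow> is_path E S' P"
  by (auto simp: is_path_def)

lemma is_path_snoc:
  assumes "is_path E S P" "v \<notin> set P" "E (last P) v"
  shows "is_path E (insert v S) (P @ [v])"
proof -
  have "E ((P @ [v]) ! i) ((P @ [v]) ! Suc i)" if "Suc i < length (P @ [v])" for i
  proof (cases "Suc i < length P")
    case False
    then have "i = length P - 1" "Suc i = length P"
      using that by auto
    then show ?thesis
      using assms(1,3) by (simp add: is_path_def nth_append last_conv_nth)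
  qed (use assms(1) in \<open>simp add: is_path_def nth_append\<close>)
  with assms(1,2) show ?thesis
    by (auto simp: is_path_def)
qed

lemma is_path_Cons:
  "is_path E S P \<Longrightarrow> v \<notin> set P \<Longrightarrow> E v (hd P) \<Longrightarrow> is_path E (insert v S) (v # P)"
  unfolding is_path_def by (auto simp: hd_conv_nth nth_Cons split: nat.split)

lemma path_connected_set_singleton: "path_connected_set E {x}"
  unfolding path_connected_set_def is_path_def by (intro ballI exI[of _ "[x]"]) auto

lemma path_connected_set_insert:
  assumes S: "path_connected_set E S" and x: "x \<in> S" "E x v" "E v x" and v: "v \<notin> S"
  shows "path_connected_set E (insert v S)"
  unfolding path_connected_set_def
proof (intro ballI)
  have path_from: "\<exists>P. is_path E (insert v S) P \<and> hd P = v \<and> last P = b" if "b \<in> S" for b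
  proof -
    obtain P where "is_path E S P" "hd P = x" "last P = b"
      using S x(1) \<open>b \<in> S\<close> unfolding path_connected_set_def by blast
    moreover from this have "is_path E (insert v S) (v # P)"
      using v x(3) by (intro is_path_Cons) (auto simp: is_path_def)
    ultimately show ?thesis
      by (intro exI[of _ "v # P"]) (simp add: is_path_def)
  qed
  have path_to: "\<exists>P. is_path E (insert v S) P \<and> hd P = a \<and> last P = v" if "a \<in> S" for a
  proof -
    obtain P where "is_path E S P" "hd P = a" "last P = x"
      using S x(1) \<open>a \<in> S\<close> unfolding path_connected_set_def by blast
    moreover from this have "is_path E (insert v S) (P @ [v])"
      using v x(2) by (intro is_path_snoc) (auto simp: is_path_def)
    ultimately show ?thesis
      by (intro exI[of _ "P @ [v]"]) (simp add: is_path_def)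
  qed
  fix a b assume "a \<in> insert v S" "b \<in> insert v S"
  then consider "a = v" "b = v" | "a = v" "b \<in> S" | "a \<in> S" "b = v" | "a \<in> S" "b \<in> S"
    by blast
  then show "\<exists>P. is_path E (insert v S) P \<and> hd P = a \<and> last P = b"
  proof cases
    case 1
    then show ?thesis by (intro exI[of _ "[v]"]) (simp add: is_path_def)
  next
    case 4
    then show ?thesis
      using S is_path_mono[of E S _ "insert v S"] unfolding path_connected_set_def by blast
  qed (use path_from path_to in blast)+
qed

lemma acyclic_unique_nbr:
  assumes "acyclic_graph VT ET" "path_connected_set ET S" "S \<subseteq> VT" "v \<in> VT - S"
    and "a \<in> S" "x \<in> S" "ET a v" "ET v x"
  shows "a = x"
proof (rule ccontr)
  assume "a \<noteq> x"
  obtain P where P: "is_path ET S P" "hd P = x" "last P = a"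
    using assms(2,5,6) unfolding path_connected_set_def by blast
  have "2 \<le> length P"
    using P \<open>a \<noteq> x\<close> by (cases P) (auto simp: is_path_def Suc_le_eq split: if_splits)
  moreover have "v \<notin> set P"
    using P(1) assms(4) by (auto simp: is_path_def)
  then have "is_path ET (insert v S) (P @ [v])"
    using P(3) assms(7) by (intro is_path_snoc[OF P(1)]) auto
  ultimately have "is_cycle VT ET (P @ [v])"
    using P(2) assms(3,4,8) unfolding is_cycle_def is_path_def by (auto simp: hd_append)
  with assms(1) show False
    unfolding acyclic_graph_def by blast
qed

lemma rtranclp_leaves_set:
  assumes "R\<^sup>*\<^sup>* a b" "a \<in> S" "b \<notin> S"
  shows "\<exists>x y. R x y \<and> x \<in> S \<and> y \<notin> S"
  using assms by (induction rule: rtranclp_induct) auto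

lemma tree_parent_ordering_prefix:
  assumes tree: "is_tree VT ET"
  shows "m < card VT \<Longrightarrow> \<exists>xs par. length xs = Suc m \<and> distinct xs \<and> set xs \<subseteq> VT \<and>
     parent_ordering par ET ET xs \<and> path_connected_set ET (set xs)"
proof (induction m)
  case 0
  obtain r where "r \<in> VT"
    using tree by (auto simp: is_tree_def)
  then show ?case
    using parent_ordering_singleton path_connected_set_singleton
    by (intro exI[of _ "[r]"] exI[of _ "\<lambda>_. 0"]) auto
next
  case (Suc m)
  then obtain xs par where xs: "length xs = Suc m" "distinct xs" "set xs \<subseteq> VT"
    "parent_ordering par ET ET xs" "path_connected_set ET (set xs)"
    by auto
  have sym: "ET u w \<Longrightarrow> ET w u" for u w
    using tree by (simp add: is_tree_def simple_graph_def)
  have "card (set xs) < card VT"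
    using xs(1,2) Suc.prems by (simp add: distinct_card)
  then obtain w where w: "w \<in> VT" "w \<notin> set xs"
    using xs(3) by (metis List.finite_set card_mono leD subsetI)
  have "(\<lambda>x y. x \<in> VT \<and> y \<in> VT \<and> ET x y)\<^sup>*\<^sup>* (xs ! 0) w"
    using tree xs(1,3) w(1) unfolding is_tree_def connected_graph_def by (simp add: subset_iff)
  then obtain x v where xv: "x \<in> set xs" "v \<in> VT" "v \<notin> set xs" "ET x v"
    using rtranclp_leaves_set[of _ "xs ! 0" w "set xs"] xs(1) w(2) by fastforce
  obtain p where p: "p < length xs" "xs ! p = x"
    using xv(1) by (metis in_set_conv_nth)
  have "i = p" if "i < length xs" "ET (xs ! i) v" for i
    using acyclic_unique_nbr[of VT ET "set xs" v "xs ! i" x] tree xs(2,3,5) xv that p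
      sym[OF xv(4)] by (auto simp: is_tree_def nth_eq_iff_index_eq)
  then have "parent_ordering (par(length xs := p)) ET ET (xs @ [v])"
    using parent_ordering_snoc[OF xs(4) p(1)] p(2) xv(4) by blast
  moreover have "path_connected_set ET (set (xs @ [v]))"
    using path_connected_set_insert[OF xs(5) xv(1,4) sym[OF xv(4)] xv(3)] by simp
  ultimately show ?case
    using xs(1,2,3) xv(2,3) by (intro exI[of _ "xs @ [v]"] exI) auto
qed

lemma tree_parent_ordering:
  assumes "is_tree VT ET"
  obtains xs par where "distinct xs" "set xs = VT" "parent_ordering par ET ET xs"
proof -
  have fin: "finite VT" and "VT \<noteq> {}"
    using assms by (auto simp: is_tree_def simple_graph_def)
  then have "card VT - 1 < card VT"
    by (simp add: card_gt_0_iff)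
  then obtain xs par where "length xs = card VT" "distinct xs" "set xs \<subseteq> VT"
    "parent_ordering par ET ET xs"
    using tree_parent_ordering_prefix[OF assms] by (metis Suc_pred' gr_implies_not0 not_gr0)
  moreover from this have "set xs = VT"
    using fin by (simp add: card_subset_eq distinct_card)
  ultimately show ?thesis
    using that by blast
qed

section \<open>Good vertices in a sparse host graph\<close>

text \<open>U is the set of vertices already used by a partial embedding. Requiring new vertices to
  avoid the closed \<Gamma>-neighbourhood of U - {p} is what makes the final copy induced.\<close>
primrec good ::
  "('a \<Rightarrow> 'a \<Rightarrow> bool) \<Rightarrow> ('a \<Rightarrow> 'a \<Rightarrow> bool) \<Rightarrow> 'a set \<Rightarrow> nat \<Rightarrow> real \<Rightarrow> 'a set \<Rightarrow> 'a \<Rightarrow> bool" where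
  "good E EG W 0 \<delta> U p = True"
| "good E EG W (Suc h) \<delta> U p \<longleftrightarrow>
     \<delta> * real (card (nbh W EG p)) \<le>
       real (card {v \<in> nbh W EG p - closed_nbh E (U - {p}). good E EG W h \<delta> (insert v U) v})"

lemma good_mono:
  assumes "finite W" "h' \<le> h" "\<delta>' \<le> \<delta>" "good E EG W h \<delta> U p"
  shows "good E EG W h' \<delta>' U p"
  using assms(2-4)
proof (induction h arbitrary: h' U p)
  case (Suc h)
  show ?case
  proof (cases h')
    case (Suc h'')
    let ?N = "nbh W EG p - closed_nbh E (U - {p})"
    have "{v \<in> ?N. good E EG W h \<delta> (insert v U) v} \<subseteq> {v \<in> ?N. good E EG W h'' \<delta>' (insert v U) v}"
      using Suc.IH Suc.prems(1,2) \<open>h' = Suc h''\<close> by auto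
    then have "card {v \<in> ?N. good E EG W h \<delta> (insert v U) v}
        \<le> card {v \<in> ?N. good E EG W h'' \<delta>' (insert v U) v}"
      using assms(1) by (intro card_mono) (auto simp: nbh_def)
    moreover have "\<delta>' * real (card (nbh W EG p)) \<le> \<delta> * real (card (nbh W EG p))"
      using Suc.prems(2) by (simp add: mult_right_mono)
    ultimately show ?thesis
      using Suc.prems(3) \<open>h' = Suc h''\<close> by simp
  qed simp
qed simp

text \<open>The recursions mirror the counting in card_spoilers_le and sum_deg_not_good_roots_le below.\<close>
primrec spoil_bound :: "real \<Rightarrow> nat \<Rightarrow> real" where
  "spoil_bound c 0 = 0"
| "spoil_bound c (Suc h) = 1 + 4 / c * spoil_bound c h"

primrec root_loss :: "real \<Rightarrow> nat \<Rightarrow> real" where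
  "root_loss c 0 = 0"
| "root_loss c (Suc h) = 2 * (root_loss c h + spoil_bound c h)"

lemma spoil_bound_nonneg: "0 < c \<Longrightarrow> 0 \<le> spoil_bound c h"
  by (induction h) auto

lemma spoil_bound_mono:
  assumes "0 < c" "h' \<le> h"
  shows "spoil_bound c h' \<le> spoil_bound c h"
proof -
  have "spoil_bound c h \<le> spoil_bound c (Suc h)" for h
  proof (induction h)
    case (Suc h)
    then have "4 / c * spoil_bound c h \<le> 4 / c * spoil_bound c (Suc h)"
      using assms(1) by (intro mult_left_mono) auto
    then show ?case
      by simp
  qed simp
  then show ?thesis
    using assms(2) by (rule lift_Suc_mono_le)
qed

lemma root_loss_nonneg: "0 < c \<Longrightarrow> 0 \<le> root_loss c h"
  by (induction h) (auto simp: spoil_bound_nonneg)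

locale sparse_graph =
  fixes V :: "'a set" and E :: "'a \<Rightarrow> 'a \<Rightarrow> bool" and c t :: real
  assumes simple: "simple_graph V E" and is_sparse: "sparse c t V E"
    and c_pos: "0 < c" and c_le_1: "c \<le> 1" and t_pos: "0 < t"
begin

lemma finite_V: "finite V"
  using simple by (simp add: simple_graph_def)

definition dense_into :: "'a set \<Rightarrow> 'a set" where
  "dense_into S = {u \<in> V. (1 - c) * real (card S) < real (card {y \<in> S. E u y})}"

lemma card_dense_into_less:
  assumes "S \<subseteq> V" "t \<le> real (card S)"
  shows "real (card (dense_into S)) < t"
proof (rule ccontr)
  let ?A = "dense_into S"
  assume "\<not> ?thesis"
  then have "t \<le> real (card ?A)"
    by simp
  moreover have "?A \<subseteq> V"
    by (auto simp: dense_into_def)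
  ultimately have "real (e_pairs E ?A S) \<le> (1 - c) * real (card ?A) * real (card S)"
    using is_sparse assms unfolding sparse_def by blast
  moreover have "finite ?A" "finite S"
    using finite_V assms(1) finite_subset by (auto simp: dense_into_def)
  then have "real (e_pairs E ?A S) = (\<Sum>u\<in>?A. real (card {y \<in> S. E u y}))"
    by (simp add: e_pairs_eq_sum)
  moreover have "?A \<noteq> {}"
    using \<open>t \<le> real (card ?A)\<close> t_pos by auto
  then have "(\<Sum>u\<in>?A. (1 - c) * real (card S)) < (\<Sum>u\<in>?A. real (card {y \<in> S. E u y}))"
    using \<open>finite ?A\<close> by (intro sum_strict_mono) (auto simp: dense_into_def)
  ultimately show False
    by (simp add: ac_simps)
qed

lemma card_Diff_closed_nbh_ge:
  assumes "S \<subseteq> V" "u \<notin> dense_into S"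
  shows "c * real (card S) - 1 \<le> real (card (S - closed_nbh E {u}))"
proof -
  let ?N = "{y \<in> S. E u y}"
  have "real (card ?N) \<le> (1 - c) * real (card S)"
  proof (cases "u \<in> V")
    case False
    then have "?N = {}"
      using simple by (auto simp: simple_graph_def)
    then have "card ?N = 0"
      by (simp only: card.empty)
    then show ?thesis
      using c_le_1 by simp
  qed (use assms(2) in \<open>simp add: dense_into_def\<close>)
  moreover have "S - closed_nbh E {u} = (S - ?N) - {u}"
    by (auto simp: closed_nbh_def)
  moreover have "finite ?N"
    using assms(1) finite_V by (simp add: finite_subset)
  then have "real (card S) - real (card ?N) - 1 \<le> real (card ((S - ?N) - {u}))"
    using real_card_Diff_ge[of ?N S] real_card_Diff_ge[of "{u}" "S - ?N"] by simp
  ultimately show ?thesis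
    by (simp add: algebra_simps)
qed

end

locale sparse_min_degree = sparse_graph +
  fixes EG :: "'a \<Rightarrow> 'a \<Rightarrow> bool" and W :: "'a set" and D :: real
  assumes subgraph: "simple_graph V EG" and W_subset: "W \<subseteq> V"
    and min_degree: "\<And>w. w \<in> W \<Longrightarrow> D \<le> real (card (nbh W EG w))"
begin

lemma finite_W: "finite W"
  using finite_V W_subset finite_subset by blast

lemma nbh_subset: "nbh W EG p \<subseteq> W"
  by (auto simp: nbh_def)

lemma finite_nbh: "finite (nbh W EG p)"
  using finite_W by (simp add: nbh_def)

lemma sum_card_nbh_swap:
  "(\<Sum>p\<in>W. real (card {v \<in> nbh W EG p. Q p v})) = (\<Sum>v\<in>W. real (card {p \<in> nbh W EG v. Q p v}))"
proof -
  have sym: "EG p v \<longleftrightarrow> EG v p" for p v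
    using subgraph by (auto simp: simple_graph_def)
  have "(\<Sum>p\<in>W. card {v \<in> nbh W EG p. Q p v}) = (\<Sum>p\<in>W. card {v \<in> W. EG p v \<and> Q p v})"
    by (simp add: nbh_def conj_assoc)
  also have "\<dots> = (\<Sum>v\<in>W. card {p \<in> W. EG p v \<and> Q p v})"
    by (rule sum_card_swap[OF finite_W finite_W])
  also have "\<dots> = (\<Sum>v\<in>W. card {p \<in> nbh W EG v. Q p v})"
    by (simp add: nbh_def conj_assoc sym)
  finally show ?thesis
    by (simp only: of_nat_sum[symmetric])
qed

lemma card_children_ge:
  assumes "p \<in> W" "0 \<le> \<delta>" "good E EG W (Suc h) \<delta> U p"
  shows "\<delta> * D \<le> real (card {v \<in> nbh W EG p - closed_nbh E (U - {p}). good E EG W h \<delta> (insert v U) v})"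
proof -
  have "\<delta> * D \<le> \<delta> * real (card (nbh W EG p))"
    using min_degree[OF assms(1)] assms(2) by (rule mult_left_mono)
  with assms(3) show ?thesis
    by simp
qed

text \<open>Adding u to U can spoil the goodness of p only if u is \<Gamma>-adjacent to almost all children
  of p or spoils a c/4-fraction of them.\<close>
lemma spoilers_subset:
  fixes h \<delta> U p
  defines "Children \<equiv> {v \<in> nbh W EG p - closed_nbh E (U - {p}). good E EG W h \<delta> (insert v U) v}"
  defines "Spoiled u \<equiv> {v \<in> Children. \<not> good E EG W h (c / 2 * \<delta>) (insert u (insert v U)) v}"
  assumes good: "good E EG W (Suc h) \<delta> U p" and large: "4 / c \<le> real (card Children)"
  shows "{u \<in> V. \<not> good E EG W (Suc h) (c / 2 * \<delta>) (insert u U) p}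
    \<subseteq> dense_into Children \<union> {u \<in> V. c / 4 * real (card Children) < real (card (Spoiled u))}"
proof
  fix u assume u: "u \<in> {u \<in> V. \<not> good E EG W (Suc h) (c / 2 * \<delta>) (insert u U) p}"
  show "u \<in> dense_into Children \<union> {u \<in> V. c / 4 * real (card Children) < real (card (Spoiled u))}"
  proof (rule ccontr)
    assume "\<not> ?thesis"
    then have typical: "u \<notin> dense_into Children"
      and light: "real (card (Spoiled u)) \<le> c / 4 * real (card Children)"
      using u by auto
    let ?Children' = "{v \<in> nbh W EG p - closed_nbh E (insert u U - {p}).
      good E EG W h (c / 2 * \<delta>) (insert v (insert u U)) v}"
    have "(Children - closed_nbh E {u}) - Spoiled u \<subseteq> ?Children'"
      using closed_nbh_insert_Diff_subset[of E u U p]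
      by (auto simp: Children_def Spoiled_def insert_commute)
    then have "real (card ((Children - closed_nbh E {u}) - Spoiled u)) \<le> real (card ?Children')"
      using finite_nbh by (simp add: card_mono)
    moreover have "real (card (Children - closed_nbh E {u})) - real (card (Spoiled u))
        \<le> real (card ((Children - closed_nbh E {u}) - Spoiled u))"
      using finite_nbh by (intro real_card_Diff_ge) (simp add: Spoiled_def Children_def)
    moreover have "c * real (card Children) - 1 \<le> real (card (Children - closed_nbh E {u}))"
      using nbh_subset W_subset typical by (intro card_Diff_closed_nbh_ge) (auto simp: Children_def)
    moreover have "4 \<le> c * real (card Children)"
      using large c_pos by (simp add: field_simps)
    moreover have "c / 2 * (\<delta> * real (card (nbh W EG p))) \<le> c / 2 * real (card Children)"
      using good c_pos by (intro mult_left_mono) (auto simp: Children_def)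
    moreover have "c / 4 * real (card Children) = c * real (card Children) / 4"
      and "c / 2 * real (card Children) = c * real (card Children) / 2"
      and "c / 2 * \<delta> * real (card (nbh W EG p)) = c / 2 * (\<delta> * real (card (nbh W EG p)))"
      by simp_all
    ultimately have "c / 2 * \<delta> * real (card (nbh W EG p)) \<le> real (card ?Children')"
      using light by linarith
    then show False
      using u by simp
  qed
qed

lemma card_spoilers_le:
  assumes "p \<in> W" "0 \<le> \<delta>" "max t (4 / c) \<le> \<delta> * D" "good E EG W h \<delta> U p"
  shows "real (card {u \<in> V. \<not> good E EG W h (c / 2 * \<delta>) (insert u U) p}) \<le> spoil_bound c h * t"
  using assms(1,4)
proof (induction h arbitrary: U p)
  case (Suc h)
  define Children where
    "Children = {v \<in> nbh W EG p - closed_nbh E (U - {p}). good E EG W h \<delta> (insert v U) v}"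
  define Spoiled where
    "Spoiled u = {v \<in> Children. \<not> good E EG W h (c / 2 * \<delta>) (insert u (insert v U)) v}" for u
  define Heavy where "Heavy = {u \<in> V. c / 4 * real (card Children) < real (card (Spoiled u))}"
  have Children_subset: "Children \<subseteq> W" and finite_Children: "finite Children"
    using nbh_subset finite_nbh by (auto simp: Children_def intro: finite_subset)
  have "\<delta> * D \<le> real (card Children)"
    unfolding Children_def using Suc.prems(1) assms(2) Suc.prems(2) by (rule card_children_ge)
  then have large: "t \<le> real (card Children)" "4 / c \<le> real (card Children)"
    using assms(3) by auto
  then have "Children \<noteq> {}"
    using t_pos by auto
  then have "real (card Heavy) \<le> spoil_bound c h * t / (c / 4)"
    unfolding Heavy_def Spoiled_def using finite_V finite_Children c_pos Suc.IH Children_subset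
    by (intro card_many_incidences_le) (auto simp: Children_def)
  moreover have "{u \<in> V. \<not> good E EG W (Suc h) (c / 2 * \<delta>) (insert u U) p} \<subseteq> dense_into Children \<union> Heavy"
    using spoilers_subset[OF Suc.prems(2)] large(2) unfolding Children_def Spoiled_def Heavy_def
    by blast
  then have "card {u \<in> V. \<not> good E EG W (Suc h) (c / 2 * \<delta>) (insert u U) p}
      \<le> card (dense_into Children \<union> Heavy)"
    using finite_V by (intro card_mono) (auto simp: dense_into_def Heavy_def)
  then have "card {u \<in> V. \<not> good E EG W (Suc h) (c / 2 * \<delta>) (insert u U) p}
      \<le> card (dense_into Children) + card Heavy"
    using card_Un_le[of "dense_into Children" Heavy] by linarith
  moreover have "real (card (dense_into Children)) < t"
    using Children_subset W_subset large(1) by (intro card_dense_into_less) auto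
  moreover have "spoil_bound c (Suc h) * t = t + spoil_bound c h * t / (c / 4)"
    by (simp add: field_simps)
  ultimately show ?case
    by linarith
qed simp

lemma card_nbh_spoilers_le:
  assumes "v \<in> W" "0 \<le> \<delta>" "max t (4 / c) \<le> \<delta> * D"
  shows "real (card {p \<in> nbh W EG v. good E EG W h \<delta> {v} v \<and> \<not> good E EG W h (c / 2 * \<delta>) (insert p {v}) v})
    \<le> spoil_bound c h * t"
proof (cases "good E EG W h \<delta> {v} v")
  case True
  have "card {p \<in> nbh W EG v. good E EG W h \<delta> {v} v \<and> \<not> good E EG W h (c / 2 * \<delta>) (insert p {v}) v}
      \<le> card {u \<in> V. \<not> good E EG W h (c / 2 * \<delta>) (insert u {v}) v}"
    using finite_V nbh_subset W_subset by (intro card_mono) auto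
  moreover have "real (card {u \<in> V. \<not> good E EG W h (c / 2 * \<delta>) (insert u {v}) v}) \<le> spoil_bound c h * t"
    using assms True by (rule card_spoilers_le)
  ultimately show ?thesis
    by linarith
qed (use spoil_bound_nonneg[OF c_pos] t_pos in simp)

text \<open>A neighbour v of a bad root p is either itself a bad root or is spoiled by p.\<close>
lemma card_nbh_le_not_good_root:
  assumes "\<not> good E EG W (Suc h) ((c / 2) ^ Suc h) {p} p"
  shows "real (card (nbh W EG p))
    \<le> 2 * real (card {v \<in> nbh W EG p. \<not> good E EG W h ((c / 2) ^ h) {v} v})
      + 2 * real (card {v \<in> nbh W EG p. good E EG W h ((c / 2) ^ h) {v} v
          \<and> \<not> good E EG W h (c / 2 * (c / 2) ^ h) (insert p {v}) v})"
proof -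
  let ?N = "nbh W EG p"
  let ?Good = "{v \<in> ?N. good E EG W h ((c / 2) ^ Suc h) {v, p} v}"
  let ?Bad = "{v \<in> ?N. \<not> good E EG W h ((c / 2) ^ Suc h) {v, p} v}"
  let ?Fail = "{v \<in> ?N. \<not> good E EG W h ((c / 2) ^ h) {v} v}"
  let ?Spoiled = "{v \<in> ?N. good E EG W h ((c / 2) ^ h) {v} v
    \<and> \<not> good E EG W h (c / 2 * (c / 2) ^ h) (insert p {v}) v}"
  have "card ?N = card ?Good + card ?Bad"
    using finite_nbh by (subst card_Un_disjoint[symmetric]) (auto intro: arg_cong[where f = card])
  moreover have "real (card ?Good) < (c / 2) ^ Suc h * real (card ?N)"
    using assms by (simp add: insert_commute)
  moreover have "(c / 2) ^ Suc h \<le> 1 / 2"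
  proof -
    have "(c / 2) ^ h \<le> 1"
      using c_pos c_le_1 by (intro power_le_one) auto
    then have "c / 2 * (c / 2) ^ h \<le> c / 2"
      using c_pos by (simp add: mult_left_le)
    then show ?thesis
      using c_le_1 by simp
  qed
  then have "(c / 2) ^ Suc h * real (card ?N) \<le> 1 / 2 * real (card ?N)"
    by (rule mult_right_mono) simp
  moreover have "card ?Bad \<le> card (?Fail \<union> ?Spoiled)"
    using finite_nbh by (intro card_mono) (auto simp: insert_commute)
  then have "card ?Bad \<le> card ?Fail + card ?Spoiled"
    using card_Un_le[of ?Fail ?Spoiled] by linarith
  ultimately show ?thesis
    by linarith
qed

lemma sum_deg_not_good_roots_le:
  assumes large: "\<And>h. h < k \<Longrightarrow> max t (4 / c) \<le> (c / 2) ^ h * D"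
  shows "h \<le> k \<Longrightarrow> (\<Sum>p\<in>W. if good E EG W h ((c / 2) ^ h) {p} p then 0 else real (card (nbh W EG p)))
    \<le> root_loss c h * t * real (card W)"
proof (induction h)
  case (Suc h)
  let ?Fail = "\<lambda>v. \<not> good E EG W h ((c / 2) ^ h) {v} v"
  let ?Spoils = "\<lambda>p v. good E EG W h ((c / 2) ^ h) {v} v
    \<and> \<not> good E EG W h (c / 2 * (c / 2) ^ h) (insert p {v}) v"
  have "(\<Sum>p\<in>W. if good E EG W (Suc h) ((c / 2) ^ Suc h) {p} p then 0 else real (card (nbh W EG p)))
      \<le> (\<Sum>p\<in>W. 2 * real (card {v \<in> nbh W EG p. ?Fail v})
        + 2 * real (card {v \<in> nbh W EG p. ?Spoils p v}))"
    using card_nbh_le_not_good_root by (intro sum_mono) auto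
  also have "\<dots> = 2 * (\<Sum>v\<in>W. real (card {p \<in> nbh W EG v. ?Fail v}))
      + 2 * (\<Sum>v\<in>W. real (card {p \<in> nbh W EG v. ?Spoils p v}))"
    by (simp only: sum.distrib sum_distrib_left[symmetric] sum_card_nbh_swap[of "\<lambda>_. ?Fail"]
        sum_card_nbh_swap[of ?Spoils])
  also have "(\<Sum>v\<in>W. real (card {p \<in> nbh W EG v. ?Fail v}))
      = (\<Sum>v\<in>W. if good E EG W h ((c / 2) ^ h) {v} v then 0 else real (card (nbh W EG v)))"
    by (rule sum.cong) auto
  also have "(\<Sum>v\<in>W. real (card {p \<in> nbh W EG v. ?Spoils p v})) \<le> (\<Sum>v\<in>W. spoil_bound c h * t)"
    using large[of h] Suc.prems c_pos by (intro sum_mono card_nbh_spoilers_le) auto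
  finally show ?case
    using Suc by (simp add: algebra_simps)
qed simp

lemma exists_good_root:
  assumes "W \<noteq> {}" "\<And>h. h < k \<Longrightarrow> max t (4 / c) \<le> (c / 2) ^ h * D" "root_loss c k * t < D"
  obtains r where "r \<in> W" "good E EG W k ((c / 2) ^ k) {r} r"
proof (rule ccontr)
  assume "\<not> thesis"
  with that have "(\<Sum>p\<in>W. if good E EG W k ((c / 2) ^ k) {p} p then 0 else real (card (nbh W EG p)))
      = (\<Sum>p\<in>W. real (card (nbh W EG p)))"
    by (intro sum.cong) auto
  also have "\<dots> \<ge> (\<Sum>p\<in>W. D)"
    by (rule sum_mono) (rule min_degree)
  moreover have "(\<Sum>p\<in>W. if good E EG W k ((c / 2) ^ k) {p} p then 0 else real (card (nbh W EG p)))
      \<le> root_loss c k * t * real (card W)"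
    by (rule sum_deg_not_good_roots_le[OF assms(2) order.refl])
  moreover have "0 < real (card W)"
    using assms(1) finite_W by (simp add: card_gt_0_iff)
  with assms(3) have "root_loss c k * t * real (card W) < D * real (card W)"
    by (rule mult_strict_right_mono)
  ultimately show False
    by (simp add: mult.commute)
qed

subsection \<open>Greedy embedding\<close>

lemma exists_good_extension:
  assumes p: "p \<in> W" "good E EG W (Suc h) \<delta> U p" and \<delta>: "0 \<le> \<delta>" "max t (4 / c) \<le> \<delta> * D"
    and I: "finite I" "\<And>i. i \<in> I \<Longrightarrow> x i \<in> W \<and> good E EG W (lev i) \<delta> U (x i)"
    and few_spoilers: "(\<Sum>i\<in>I. spoil_bound c (lev i)) * t < \<delta> * D"
  obtains v where "v \<in> nbh W EG p" "v \<notin> closed_nbh E (U - {p})" "good E EG W h \<delta> (insert v U) v"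
    "\<And>i. i \<in> I \<Longrightarrow> good E EG W (lev i) (c / 2 * \<delta>) (insert v U) (x i)"
proof -
  define Children where
    "Children = {v \<in> nbh W EG p - closed_nbh E (U - {p}). good E EG W h \<delta> (insert v U) v}"
  define Spoilers where
    "Spoilers i = {u \<in> V. \<not> good E EG W (lev i) (c / 2 * \<delta>) (insert u U) (x i)}" for i
  have "real (card (\<Union>i\<in>I. Spoilers i)) \<le> (\<Sum>i\<in>I. real (card (Spoilers i)))"
    using card_UN_le[OF I(1), of Spoilers] by (simp only: of_nat_sum[symmetric] of_nat_le_iff)
  also have "\<dots> \<le> (\<Sum>i\<in>I. spoil_bound c (lev i) * t)"
    unfolding Spoilers_def using I(2) \<delta> by (intro sum_mono card_spoilers_le) auto
  also have "\<dots> < \<delta> * D"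
    using few_spoilers by (simp add: sum_distrib_right)
  also have "\<dots> \<le> real (card Children)"
    unfolding Children_def by (rule card_children_ge[OF p(1) \<delta>(1) p(2)])
  finally have "\<not> Children \<subseteq> (\<Union>i\<in>I. Spoilers i)"
    using card_mono[of "\<Union>i\<in>I. Spoilers i" Children] finite_V I(1)
    by (auto simp: Spoilers_def)
  then obtain v where "v \<in> Children" "\<And>i. i \<in> I \<Longrightarrow> v \<notin> Spoilers i"
    by blast
  moreover have "v \<in> V"
    using \<open>v \<in> Children\<close> nbh_subset W_subset by (auto simp: Children_def)
  ultimately show thesis
    using that by (auto simp: Children_def Spoilers_def)
qed

lemma budget_le_power:
  assumes large: "max t (4 / c) + real k * spoil_bound c k * t \<le> (c / 2) ^ (2 * k) * D"
    and "h \<le> 2 * k"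
  shows "max t (4 / c) \<le> (c / 2) ^ h * D" "real k * spoil_bound c k * t < (c / 2) ^ h * D"
proof -
  have "0 \<le> real k * spoil_bound c k * t"
    using spoil_bound_nonneg[OF c_pos] t_pos by simp
  moreover have "0 < max t (4 / c)"
    using t_pos by simp
  ultimately have "0 < (c / 2) ^ (2 * k) * D"
    using large by linarith
  then have "0 \<le> D"
    using c_pos by (simp add: zero_less_mult_iff)
  moreover have "(c / 2) ^ (2 * k) \<le> (c / 2) ^ h"
    using assms(2) c_pos c_le_1 by (intro power_decreasing) auto
  ultimately have "(c / 2) ^ (2 * k) * D \<le> (c / 2) ^ h * D"
    by (intro mult_right_mono)
  with large \<open>0 \<le> real k * spoil_bound c k * t\<close> \<open>0 < max t (4 / c)\<close>
  show "max t (4 / c) \<le> (c / 2) ^ h * D" "real k * spoil_bound c k * t < (c / 2) ^ h * D"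
    by linarith+
qed

text \<open>The copy is grown one vertex at a time and each step costs a factor c/2 in the density
  parameter, which is why the degree budget is measured against (c/2)^(2k).\<close>
lemma exists_next_vertex:
  assumes us: "length us = Suc m" "set us \<subseteq> W" "Suc m < k" "par (Suc m) \<le> m"
    and good: "\<And>i. i \<le> m \<Longrightarrow> good E EG W (k - i) ((c / 2) ^ (k + m)) (set us) (us ! i)"
    and large: "max t (4 / c) + real k * spoil_bound c k * t \<le> (c / 2) ^ (2 * k) * D"
  obtains v where "v \<in> nbh W EG (us ! par (Suc m))" "v \<notin> closed_nbh E (set us - {us ! par (Suc m)})"
    "good E EG W (k - Suc m) ((c / 2) ^ (k + Suc m)) (insert v (set us)) v"
    "\<And>i. i \<le> m \<Longrightarrow> good E EG W (k - i) ((c / 2) ^ (k + Suc m)) (insert v (set us)) (us ! i)"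
proof -
  define \<delta> where "\<delta> = (c / 2) ^ (k + m)"
  define p where "p = par (Suc m)"
  have \<delta>_pos: "0 \<le> \<delta>"
    using c_pos by (simp add: \<delta>_def)
  have \<delta>_large: "max t (4 / c) \<le> \<delta> * D" and budget: "real k * spoil_bound c k * t < \<delta> * D"
    unfolding \<delta>_def using budget_le_power[OF large] us(3) by simp_all
  have "(\<Sum>i\<le>m. spoil_bound c (k - i)) \<le> (\<Sum>i\<le>m. spoil_bound c k)"
    using c_pos by (intro sum_mono spoil_bound_mono) auto
  also have "\<dots> \<le> real k * spoil_bound c k"
    using us(3) spoil_bound_nonneg[OF c_pos] by (simp add: mult_right_mono)
  finally have "(\<Sum>i\<le>m. spoil_bound c (k - i)) * t \<le> real k * spoil_bound c k * t"
    using t_pos by (simp add: mult_right_mono)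
  with budget have few_spoilers: "(\<Sum>i\<le>m. spoil_bound c (k - i)) * t < \<delta> * D"
    by linarith
  have parent_good: "good E EG W (Suc (k - Suc p)) \<delta> (set us) (us ! p)"
    using good[of p] us(3,4) by (simp add: \<delta>_def p_def Suc_diff_Suc)
  have used_good: "us ! i \<in> W \<and> good E EG W (k - i) \<delta> (set us) (us ! i)" if "i \<in> {..m}" for i
    using that us(1,2) good by (auto simp: \<delta>_def)
  obtain v where v: "v \<in> nbh W EG (us ! p)" "v \<notin> closed_nbh E (set us - {us ! p})"
    "good E EG W (k - Suc p) \<delta> (insert v (set us)) v"
    "\<And>i. i \<in> {..m} \<Longrightarrow> good E EG W (k - i) (c / 2 * \<delta>) (insert v (set us)) (us ! i)"
    using exists_good_extension[OF _ parent_good \<delta>_pos \<delta>_large finite_atMost used_good few_spoilers]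
      used_good[of p] us(4) by (auto simp: p_def)
  moreover have "c / 2 * \<delta> \<le> \<delta>" "k - Suc m \<le> k - Suc p"
    using c_le_1 \<delta>_pos us(4) mult_right_mono[of "c / 2" 1 \<delta>] by (auto simp: p_def)
  ultimately show thesis
    using that good_mono[OF finite_W _ _ v(3)] by (simp add: p_def \<delta>_def)
qed

lemma exists_good_partial_copy:
  assumes par: "\<And>j. 0 < j \<Longrightarrow> j < k \<Longrightarrow> par j < j"
    and root: "r \<in> W" "good E EG W k ((c / 2) ^ k) {r} r"
    and large: "max t (4 / c) + real k * spoil_bound c k * t \<le> (c / 2) ^ (2 * k) * D"
  shows "m < k \<Longrightarrow> \<exists>us. length us = Suc m \<and> distinct us \<and> set us \<subseteq> W \<and>
    parent_ordering par EG E us \<and> (\<forall>i\<le>m. good E EG W (k - i) ((c / 2) ^ (k + m)) (set us) (us ! i))"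
proof (induction m)
  case 0
  then show ?case
    using root parent_ordering_singleton by (intro exI[of _ "[r]"]) auto
next
  case (Suc m)
  then obtain us where us: "length us = Suc m" "distinct us" "set us \<subseteq> W" "parent_ordering par EG E us"
    "\<And>i. i \<le> m \<Longrightarrow> good E EG W (k - i) ((c / 2) ^ (k + m)) (set us) (us ! i)"
    by auto
  have p: "par (Suc m) \<le> m"
    using par[of "Suc m"] Suc.prems by simp
  obtain v where v: "v \<in> nbh W EG (us ! par (Suc m))"
    "v \<notin> closed_nbh E (set us - {us ! par (Suc m)})"
    "good E EG W (k - Suc m) ((c / 2) ^ (k + Suc m)) (insert v (set us)) v"
    "\<And>i. i \<le> m \<Longrightarrow> good E EG W (k - i) ((c / 2) ^ (k + Suc m)) (insert v (set us)) (us ! i)"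
    using exists_next_vertex[where par = par, OF us(1,3) Suc.prems p us(5) large] by blast
  have "v \<noteq> us ! par (Suc m)"
    using v(1) subgraph by (auto simp: nbh_def simple_graph_def)
  then have "v \<notin> set us"
    using v(2) by (auto simp: closed_nbh_def)
  have "parent_ordering par EG E (us @ [v])"
    using p us(1) v(1,2) by (intro parent_ordering_snoc_avoiding[OF us(4,2)]) (auto simp: nbh_def)
  moreover have "good E EG W (k - i) ((c / 2) ^ (k + Suc m)) (set (us @ [v])) ((us @ [v]) ! i)"
    if "i \<le> Suc m" for i
    using that v(3) v(4)[of i] us(1) by (cases "i = Suc m") (auto simp: nth_append)
  moreover have "length (us @ [v]) = Suc (Suc m)" "distinct (us @ [v])" "set (us @ [v]) \<subseteq> W"
    using us(1,2,3) v(1) \<open>v \<notin> set us\<close> nbh_subset by auto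
  ultimately show ?case
    by blast
qed

lemma exists_parent_ordered_copy:
  assumes "W \<noteq> {}" "0 < k" "\<And>j. 0 < j \<Longrightarrow> j < k \<Longrightarrow> par j < j"
    and large: "max t (4 / c) + real k * spoil_bound c k * t \<le> (c / 2) ^ (2 * k) * D"
    and "root_loss c k * t < D"
  obtains us where "length us = k" "distinct us" "set us \<subseteq> W" "parent_ordering par EG E us"
proof -
  have "max t (4 / c) \<le> (c / 2) ^ h * D" if "h < k" for h
    using that by (intro budget_le_power(1)[OF large]) simp
  then obtain r where "r \<in> W" "good E EG W k ((c / 2) ^ k) {r} r"
    using exists_good_root assms(1,5) by blast
  then show thesis
    using exists_good_partial_copy[OF assms(3) _ _ large, of r "k - 1"] assms(2) that by auto
qed

end

definition tree_constant :: "real \<Rightarrow> nat \<Rightarrow> real" where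
  "tree_constant c k = (1 + 4 / c + real k * spoil_bound c k) / (c / 2) ^ (2 * k) + root_loss c k"

lemma tree_constant_pos: "0 < c \<Longrightarrow> 0 < tree_constant c k"
  unfolding tree_constant_def
  by (intro add_pos_nonneg divide_pos_pos) (auto simp: spoil_bound_nonneg root_loss_nonneg)

lemma induced_copy_if_many_edges:
  assumes tree: "is_tree VT ET"
    and host: "simple_graph V E" "sparse c t V E" "0 < c" "c \<le> 1" "1 < t"
    and G: "simple_graph V EG"
    and many_edges: "tree_constant c (card VT) * t * real (card V) < real (num_edges V EG)"
  shows "\<exists>f. induced_copy VT ET V EG E f"
proof -
  obtain xs par where xs: "distinct xs" "set xs = VT" "parent_ordering par ET ET xs"
    using tree_parent_ordering[OF tree] by blast
  define k where "k = length xs"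
  define D where "D = tree_constant c k * t"
  have k: "card VT = k" "0 < k"
    using xs(1,2) tree by (auto simp: k_def distinct_card is_tree_def)
  obtain W where W: "W \<subseteq> V" "W \<noteq> {}" "\<forall>w\<in>W. D \<le> real (card (nbh W EG w))"
    using exists_min_degree_subgraph[of V EG D] host(1) G many_edges
    by (auto simp: simple_graph_def D_def k(1))
  interpret sparse_min_degree V E c t EG W D
    using host G W by unfold_locales auto
  have "4 / c * 1 \<le> 4 / c * t"
    using host(3,5) by (intro mult_left_mono) auto
  then have "max t (4 / c) + real k * spoil_bound c k * t
      \<le> (1 + 4 / c + real k * spoil_bound c k) * t"
    using host(3,5) by (simp add: algebra_simps)
  also have "\<dots> \<le> (c / 2) ^ (2 * k) * D"
    using host(3) root_loss_nonneg[of c k] t_pos by (simp add: D_def tree_constant_def field_simps)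
  finally have large: "max t (4 / c) + real k * spoil_bound c k * t \<le> (c / 2) ^ (2 * k) * D" .
  have "0 < (1 + 4 / c + real k * spoil_bound c k) / (c / 2) ^ (2 * k)"
    using host(3) spoil_bound_nonneg[of c k] by (simp add: add_pos_nonneg)
  then have "root_loss c k * t < D"
    using t_pos by (simp add: D_def tree_constant_def)
  moreover have "\<And>j. 0 < j \<Longrightarrow> j < k \<Longrightarrow> par j < j"
    using xs(3) by (simp add: parent_ordering_def k_def)
  ultimately obtain us where us: "length us = k" "distinct us" "set us \<subseteq> W" "parent_ordering par EG E us"
    using exists_parent_ordered_copy[OF W(2) k(2) _ large] by blast
  show ?thesis
    using induced_copy_of_parent_orderings[OF _ xs host(1) G us(2) _ _ us(4)] tree us(1,3) W(1)
    by (auto simp: is_tree_def k_def)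
qed

theorem theorem1p7:
  fixes VT :: "'b set" and ET :: "'b \<Rightarrow> 'b \<Rightarrow> bool" and c :: real
  assumes "is_tree VT ET" and "c > 0"
  shows "\<exists>C::real. C > 1 \<and>
    (\<forall>(V :: nat set) (E :: nat \<Rightarrow> nat \<Rightarrow> bool) (t :: real) (EG :: nat \<Rightarrow> nat \<Rightarrow> bool).
       simple_graph V E \<longrightarrow> V \<noteq> {} \<longrightarrow> t > 0 \<longrightarrow> sparse c t V E \<longrightarrow>
       simple_graph V EG \<longrightarrow> (\<forall>u v. EG u v \<longrightarrow> E u v) \<longrightarrow>
       real (num_edges V EG) \<ge> C * t * real (card V) \<longrightarrow>
       (\<exists>f. induced_copy VT ET V EG E f))"
proof -
  define c' where "c' = min c 1"
  have c': "0 < c'" "c' \<le> 1" "c' \<le> c"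
    using assms(2) by (auto simp: c'_def)
  define K where "K = tree_constant c' (card VT)"
  have "0 < K"
    unfolding K_def using c'(1) by (rule tree_constant_pos)
  show ?thesis
  proof (intro exI[of _ "K + 1"] conjI allI impI)
    fix V E t EG
    assume host: "simple_graph V E" "V \<noteq> {}" "0 < t" "sparse c t V E"
      and G: "simple_graph V EG" "\<forall>u v. EG u v \<longrightarrow> E u v"
      and many_edges: "(K + 1) * t * real (card V) \<le> real (num_edges V EG)"
    have "0 < t * real (card V)"
      using host(1-3) by (simp add: simple_graph_def card_gt_0_iff)
    moreover have "(K + 1) * t * real (card V) = K * t * real (card V) + t * real (card V)"
      by (simp add: algebra_simps)
    ultimately have fewer: "K * t * real (card V) < real (num_edges V EG)"
      using many_edges by linarith
    have "0 < K * t * real (card V)"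
      using \<open>0 < K\<close> \<open>0 < t * real (card V)\<close> by (simp add: mult.assoc)
    with fewer have "0 < num_edges V EG"
      by (metis of_nat_0_less_iff order.strict_trans)
    then have "1 < t"
      by (rule sparse_gt_one_if_edges[OF host(4) assms(2) G(2)])
    with fewer show "\<exists>f. induced_copy VT ET V EG E f"
      using induced_copy_if_many_edges[OF assms(1) host(1) sparse_mono[OF host(4) c'(3)] c'(1,2)]
        G(1) by (simp add: K_def)
  qed (use \<open>0 < K\<close> in simp)
qed

end
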